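(* Assume the setting described in the context. Let $Q,R\in\mathcal{D}$ with $Q\subset Q^*$, $\ell(Q)=2^i\ell(R)$, $d(Q,R)>\ell(R)^\gamma\ell(Q)^{1-\gamma}$ and $D(Q,R)/\ell(Q)\sim 2^j$ for some integers $i\ge0$, $j\ge0$. Let $(x,t)\in W_R$ and $S=Q^{(j+\theta(i+j))}$. Then for every $f\in L^1_{loc}(\mu)$, $$\left(\int_{\mathbb{R}^n}|\theta_t(\Delta_Q f)(y)|^2\Big(\frac{t}{t+|x-y|}\Big)^{m\lambda}\frac{d\mu(y)}{t^m}\right)^{1/2}\le C\,2^{-\frac{\alpha}{4}(i+j)}\,\ell(S)^{-m}\,\|\Delta_Q f\|_{L^1(\mu)},$$ where $C$ is independent of $Q,R,i,j,x,t,f$.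
   Context: Measure and kernel: $n\ge1$, $m>0$; $\mu$ is a Borel measure on $\mathbb{R}^n$ with $\mu(B(x,r))\le C r^m$ for all $x$, $r>0$; distances, balls and cubes use the $\ell^\infty$ metric $|x-y|=\max_i|x_i-y_i|$. Fix $\lambda>2$ and $0<\alpha\le m(\lambda-2)/2$. The kernel $s_t:\mathbb{R}^n\times\mathbb{R}^n\to\mathbb{C}$ ($t>0$) satisfies $|s_t(x,y)|\le C t^\alpha/(t+|x-y|)^{m+\alpha}$ and $|s_t(x,y)-s_t(x,y')|\le C|y-y'|^\alpha/(t+|x-y|)^{m+\alpha}$ whenever $|y-y'|<t/2$; $\theta_t f(y)=\int s_t(y,z)f(z)\,d\mu(z)$. Dyadic grid: for a fixed sequence $\beta=(\beta_j)_{j\in\mathbb{Z}}$, $\beta_j\in\{0,1\}^n$, let $\mathcal{D}=\bigcup_{k\in\mathbb{Z}}\mathcal{D}_k$, $\mathcal{D}_k=\{2^k([0,1)^n+v)+\sum_{j<k}2^j\beta_j: v\in\mathbb{Z}^n\}$. For $Q\in\mathcal{D}$, $\ell(Q)$ is its side length, $\operatorname{ch}(Q)$ its $2^n$ dyadic children, and $Q^{(k)}$ the unique cube of $\mathcal{D}$ with $\ell(Q^{(k)})=2^k\ell(Q)$ and $Q\subset Q^{(k)}$. Fix an integer $r\ge1$ and $\gamma\in(0,1/2)$ with $\gamma\le \frac{\alpha}{2(m+\alpha)}$ and $\frac{m\gamma}{1-\gamma}\le\frac{\alpha}{4}$. $d(Q,R)$ is the distance between cubes $Q,R$, $D(Q,R)=\ell(Q)+\ell(R)+d(Q,R)$,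 and "$A\sim 2^j$" means $2^j<A\le 2^{j+1}$. $\theta(j)=\lceil (j\gamma+r)/(1-\gamma)\rceil$ (smallest integer $\ge$ the number). $W_R=R\times(\ell(R)/2,\ell(R)]$. Twisted martingale differences: let $1<p\le2$, $p'=p/(p-1)$. For each cube $Q$ let $b_Q$ satisfy $\operatorname{supp}b_Q\subset Q$, $\langle b_Q\rangle_Q=1$ and $\|b_Q\|^p_{L^p(\mu)}\le A\mu(Q)$, where $\langle h\rangle_Q=\mu(Q)^{-1}\int_Q h\,d\mu$ and $A$ is a fixed constant. Fix $s\in\mathbb{Z}$ and $Q^*\in\mathcal{D}$ with $\ell(Q^* )=2^s$. Stopping cubes: $\mathcal{F}^0=\{Q^*\}$; given $\mathcal{F}^j$, $\mathcal{F}^{j+1}$ consists, for each $F\in\mathcal{F}^j$, of the maximal cubes $Q\in\mathcal{D}$, $Q\subsetneq F$, with $|\langle b_F\rangle_Q|<1/2$ or $\langle|b_F|^p\rangle_Q>2^{p'+1}A^{p'}$; $\mathcal{F}_{Q^*}=\bigcup_j\mathcal{F}^j$. For $Q\in\mathcal{D}$, $Q\subset Q^*$, $Q^a$ is the minimal $F\in\mathcal{F}_{Q^*}$ with $Q\subset F$. For $f\in L^1_{loc}(\mu)$ and $Q\subset Q^*$, $$\Delta_Q f=\sum_{Q'\in\operatorname{ch}(Q)}\Big[\frac{\langle f\rangle_{Q'}}{\langle b_{(Q')^a}\rangle_{Q'}}b_{(Q')^a}-\frac{\langle f\rangle_Q}{\langle b_{Q^a}\rangle_Q}b_{Q^a}\Big]\mathbf{1}_{Q'},$$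 except that for $Q=Q^*$ one adds the term $\langle f\rangle_{Q^*}b_{Q^*}$. *)

theory Defs
  imports "HOL-Analysis.Analysis"
begin

definition linf :: "real^'n \<Rightarrow> real^'n \<Rightarrow> real" where
  "linf x y = Max (range (\<lambda>i. \<bar>x$i - y$i\<bar>))"

definition linf_ball :: "real^'n \<Rightarrow> real \<Rightarrow> (real^'n) set" where
  "linf_ball x r = {y. linf x y < r}"

text \<open>shift k = sum over j < k of 2^j beta_j (convergent series)\<close>
definition dshift :: "(int \<Rightarrow> real^'n) \<Rightarrow> int \<Rightarrow> real^'n" where
  "dshift \<beta> k = (\<Sum>l. ((2::real) powr (real_of_int k - 1 - real l)) *\<^sub>R \<beta> (k - 1 - int l))"

definition dcube :: "(int \<Rightarrow> real^'n) \<Rightarrow> int \<Rightarrow> int^'n \<Rightarrow> (real^'n) set" where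
  "dcube \<beta> k v = {x. \<forall>i. 2 powr real_of_int k * real_of_int (v$i) + dshift \<beta> k $ i \<le> x$i
                        \<and> x$i < 2 powr real_of_int k * (real_of_int (v$i) + 1) + dshift \<beta> k $ i}"

definition Dk :: "(int \<Rightarrow> real^'n) \<Rightarrow> int \<Rightarrow> (real^'n) set set" where
  "Dk \<beta> k = range (dcube \<beta> k)"

definition Dgrid :: "(int \<Rightarrow> real^'n) \<Rightarrow> (real^'n) set set" where
  "Dgrid \<beta> = (\<Union>k. Dk \<beta> k)"

definition dlev :: "(int \<Rightarrow> real^'n) \<Rightarrow> (real^'n) set \<Rightarrow> int" where
  "dlev \<beta> Q = (THE k. Q \<in> Dk \<beta> k)"

definition side :: "(int \<Rightarrow> real^'n) \<Rightarrow> (real^'n) set \<Rightarrow> real" where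
  "side \<beta> Q = 2 powr real_of_int (dlev \<beta> Q)"

definition dchildren :: "(int \<Rightarrow> real^'n) \<Rightarrow> (real^'n) set \<Rightarrow> (real^'n) set set" where
  "dchildren \<beta> Q = {Q' \<in> Dk \<beta> (dlev \<beta> Q - 1). Q' \<subseteq> Q}"

definition danc :: "(int \<Rightarrow> real^'n) \<Rightarrow> (real^'n) set \<Rightarrow> int \<Rightarrow> (real^'n) set" where
  "danc \<beta> Q k = (THE S. S \<in> Dk \<beta> (dlev \<beta> Q + k) \<and> Q \<subseteq> S)"

definition setdist_inf :: "(real^'n) set \<Rightarrow> (real^'n) set \<Rightarrow> real" where
  "setdist_inf Q R = Inf {linf x y | x y. x \<in> Q \<and> y \<in> R}"

definition longdist :: "(int \<Rightarrow> real^'n) \<Rightarrow> (real^'n) set \<Rightarrow> (real^'n) set \<Rightarrow> real" where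
  "longdist \<beta> Q R = side \<beta> Q + side \<beta> R + setdist_inf Q R"

definition thetafun :: "real \<Rightarrow> nat \<Rightarrow> nat \<Rightarrow> int" where
  "thetafun \<gamma> r j = \<lceil>(real j * \<gamma> + real r) / (1 - \<gamma>)\<rceil>"

definition avg :: "(real^'n) measure \<Rightarrow> (real^'n) set \<Rightarrow> (real^'n \<Rightarrow> complex) \<Rightarrow> complex" where
  "avg M Q h = (\<integral>x\<in>Q. h x \<partial>M) / complex_of_real (measure M Q)"

definition ravg :: "(real^'n) measure \<Rightarrow> (real^'n) set \<Rightarrow> (real^'n \<Rightarrow> real) \<Rightarrow> real" where
  "ravg M Q h = (\<integral>x\<in>Q. h x \<partial>M) / measure M Q"

definition theta_op :: "(real^'n) measure \<Rightarrow> (real \<Rightarrow> real^'n \<Rightarrow> real^'n \<Rightarrow> complex) \<Rightarrow> real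
     \<Rightarrow> (real^'n \<Rightarrow> complex) \<Rightarrow> real^'n \<Rightarrow> complex" where
  "theta_op M s t g y = (\<integral>z. s t y z * g z \<partial>M)"

definition stopcond :: "(real^'n) measure \<Rightarrow> ((real^'n) set \<Rightarrow> real^'n \<Rightarrow> complex) \<Rightarrow> real \<Rightarrow> real
      \<Rightarrow> (real^'n) set \<Rightarrow> (real^'n) set \<Rightarrow> bool" where
  "stopcond M b A p F Q \<longleftrightarrow>
     cmod (avg M Q (b F)) < 1/2 \<or>
     ravg M Q (\<lambda>x. cmod (b F x) powr p) > 2 powr (p/(p-1) + 1) * A powr (p/(p-1))"

definition stopchildren :: "(int \<Rightarrow> real^'n) \<Rightarrow> (real^'n) measure \<Rightarrow> ((real^'n) set \<Rightarrow> real^'n \<Rightarrow> complex)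
      \<Rightarrow> real \<Rightarrow> real \<Rightarrow> (real^'n) set \<Rightarrow> (real^'n) set set" where
  "stopchildren \<beta> M b A p F = {Q \<in> Dgrid \<beta>. Q \<subset> F \<and> stopcond M b A p F Q \<and>
      (\<forall>Q' \<in> Dgrid \<beta>. Q \<subseteq> Q' \<and> Q' \<subset> F \<and> stopcond M b A p F Q' \<longrightarrow> Q' = Q)}"

fun stopgen :: "(int \<Rightarrow> real^'n) \<Rightarrow> (real^'n) measure \<Rightarrow> ((real^'n) set \<Rightarrow> real^'n \<Rightarrow> complex)
      \<Rightarrow> real \<Rightarrow> real \<Rightarrow> (real^'n) set \<Rightarrow> nat \<Rightarrow> (real^'n) set set" where
  "stopgen \<beta> M b A p Qs 0 = {Qs}"
| "stopgen \<beta> M b A p Qs (Suc j) = (\<Union>F \<in> stopgen \<beta> M b A p Qs j. stopchildren \<beta> M b A p F)"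

definition stopfam :: "(int \<Rightarrow> real^'n) \<Rightarrow> (real^'n) measure \<Rightarrow> ((real^'n) set \<Rightarrow> real^'n \<Rightarrow> complex)
      \<Rightarrow> real \<Rightarrow> real \<Rightarrow> (real^'n) set \<Rightarrow> (real^'n) set set" where
  "stopfam \<beta> M b A p Qs = (\<Union>j. stopgen \<beta> M b A p Qs j)"

definition stopparent :: "(int \<Rightarrow> real^'n) \<Rightarrow> (real^'n) measure \<Rightarrow> ((real^'n) set \<Rightarrow> real^'n \<Rightarrow> complex)
      \<Rightarrow> real \<Rightarrow> real \<Rightarrow> (real^'n) set \<Rightarrow> (real^'n) set \<Rightarrow> (real^'n) set" where
  "stopparent \<beta> M b A p Qs Q = (THE F. F \<in> stopfam \<beta> M b A p Qs \<and> Q \<subseteq> F \<and>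
      (\<forall>F' \<in> stopfam \<beta> M b A p Qs. Q \<subseteq> F' \<longrightarrow> F \<subseteq> F'))"

definition Delta :: "(int \<Rightarrow> real^'n) \<Rightarrow> (real^'n) measure \<Rightarrow> ((real^'n) set \<Rightarrow> real^'n \<Rightarrow> complex)
      \<Rightarrow> real \<Rightarrow> real \<Rightarrow> (real^'n) set \<Rightarrow> (real^'n) set \<Rightarrow> (real^'n \<Rightarrow> complex) \<Rightarrow> real^'n \<Rightarrow> complex" where
  "Delta \<beta> M b A p Qs Q f x =
     (\<Sum>Q' \<in> dchildren \<beta> Q.
        (avg M Q' f / avg M Q' (b (stopparent \<beta> M b A p Qs Q')) * b (stopparent \<beta> M b A p Qs Q') x
         - avg M Q f / avg M Q (b (stopparent \<beta> M b A p Qs Q)) * b (stopparent \<beta> M b A p Qs Q) x)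
        * indicator Q' x)
     + (if Q = Qs then avg M Qs f * b Qs x else 0)"

end

theory Submission
  imports Defs
begin

(* Delta_Q f vanishes off Q, and every z in Q lies at distance at least d = d(Q,R) >= t from x.
   Cauchy-Schwarz against |Delta_Q f| and Tonelli therefore reduce the estimate to a bound, uniform
   in z in Q, for the weighted L^2 norm of y |-> s_t(y,z). Splitting according to whether y is far
   from z (small kernel) or from x (small weight), and summing the growth bound over dyadic balls
   B(c, 2^k t), that norm is at most C t^(2 alpha) d^(-2(m + alpha)). The separation hypothesis
   gives t <= 2^-i l(Q) and d >= 2^j 2^(-i gamma) l(Q) / 3, and the constraints on gamma make the
   resulting power of 2 beat the factor l(S)^(-2m) = (2^(j + theta) l(Q))^(-2m). *)

section \<open>The ell-infinity metric\<close>

lemma abs_component_le_linf: "\<bar>x$i - y$i\<bar> \<le> linf x y"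
  unfolding linf_def by (rule Max_ge) auto

lemma linf_le_iff: "linf x y \<le> r \<longleftrightarrow> (\<forall>i. \<bar>x$i - y$i\<bar> \<le> r)"
  unfolding linf_def by (subst Max_le_iff) auto

lemma linf_nonneg: "0 \<le> linf x y"
  using abs_component_le_linf[of x undefined y] by linarith

lemma linf_commute: "linf x y = linf y x"
  unfolding linf_def by (simp add: abs_minus_commute)

lemma linf_triangle: "linf x z \<le> linf x y + linf y z"
proof -
  have "\<bar>x$i - z$i\<bar> \<le> linf x y + linf y z" for i
    using abs_component_le_linf[of x i y] abs_component_le_linf[of y i z] by linarith
  then show ?thesis by (simp add: linf_le_iff)
qed

lemma borel_measurable_linf[measurable]:
  fixes f g :: "'b \<Rightarrow> real^'n"
  assumes [measurable]: "f \<in> borel_measurable N" "g \<in> borel_measurable N"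
  shows "(\<lambda>w. linf (f w) (g w)) \<in> borel_measurable N"
proof -
  have [measurable]: "(\<lambda>x. f x $ i) \<in> borel_measurable N" "(\<lambda>x. g x $ i) \<in> borel_measurable N" for i
    by (auto intro: measurable_compose[OF _ borel_measurable_nth])
  show ?thesis unfolding linf_def by measurable
qed

lemma linf_ball_borel: "linf_ball c r \<in> sets borel"
  unfolding linf_ball_def by measurable

lemma setdist_inf_le_linf:
  assumes "z \<in> Q" "x \<in> R"
  shows "setdist_inf Q R \<le> linf x z"
proof -
  have "setdist_inf Q R \<le> linf z x" unfolding setdist_inf_def
    by (rule cInf_lower) (use assms in \<open>auto intro: bdd_belowI[of _ 0] simp: linf_nonneg\<close>)
  then show ?thesis by (simp add: linf_commute)
qed

lemma sigma_finite_if_linf_ball_growth: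
  fixes M :: "(real^'n) measure"
  assumes sets_M: "sets M = sets borel"
    and growth: "\<And>x \<rho>. \<rho> > 0 \<Longrightarrow> emeasure M (linf_ball x \<rho>) \<le> ennreal (C0 * \<rho> powr m)"
  shows "sigma_finite_measure M"
proof (rule sigma_finite_measure.intro, intro exI conjI)
  define B where "B = range (\<lambda>n::nat. linf_ball (0::real^'n) (real n + 1))"
  show "countable B" "B \<subseteq> sets M" unfolding B_def using linf_ball_borel sets_M by auto
  have "y \<in> linf_ball 0 (real (nat \<lceil>linf 0 y\<rceil>) + 1)" for y :: "real^'n"
    unfolding linf_ball_def using real_nat_ceiling_ge[of "linf 0 y"] by simp
  then show "\<Union> B = space M" unfolding B_def using sets_eq_imp_space_eq[OF sets_M] by auto
  have "emeasure M (linf_ball 0 (real n + 1)) \<noteq> \<infinity>" for n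
    using neq_top_trans[OF ennreal_neq_top growth] by simp
  then show "\<forall>a\<in>B. emeasure M a \<noteq> \<infinity>" unfolding B_def by blast
qed

section \<open>Weighted estimates for the kernel\<close>

lemma dyadic_scale_exists:
  fixes t \<rho> :: real
  assumes t: "t > 0" and \<rho>: "\<rho> \<ge> 0"
  obtains k :: nat where "\<rho> < 2^k * t" and "t / (t + \<rho>) \<le> 2 / 2^k"
proof (cases "\<rho> < t")
  case True
  have "t / (t + \<rho>) \<le> 1" using t \<rho> by simp
  then show ?thesis using that[of 0] True by simp
next
  case False
  have "\<exists>k. \<rho> / t < 2 ^ k" by (rule real_arch_pow) simp
  then have "\<exists>k. \<rho> < 2^k * t" using t by (simp add: divide_simps)
  define k where "k = (LEAST k. \<rho> < 2^k * t)"
  have k: "\<rho> < 2^k * t" unfolding k_def by (rule LeastI_ex) fact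
  have "k \<noteq> 0" using k False by (intro notI) simp
  then have "\<not> \<rho> < 2^(k - 1) * t" unfolding k_def by (intro not_less_Least) simp
  then have "2^k * t \<le> 2 * \<rho>" using \<open>k \<noteq> 0\<close> by (cases k) auto
  then have "t / (t + \<rho>) \<le> 2 / 2^k" using t \<rho> by (simp add: divide_simps mult.commute)
  then show ?thesis using that k by blast
qed

definition decay_weight_const :: "real \<Rightarrow> real \<Rightarrow> real \<Rightarrow> real" where
  "decay_weight_const C0 m e = 2 powr e * max C0 0 / (1 - 2 powr (m - e))"

lemma decay_weight_const_nonneg: "m < e \<Longrightarrow> 0 \<le> decay_weight_const C0 m e"
  unfolding decay_weight_const_def using powr_less_one[of 2 "m - e"] by (auto intro!: divide_nonneg_pos)

text \<open>The weight is dominated by \<open>\<Sum>\<^sub>k 2^{e(1-k)}\<close> times the indicator of the ball of radius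
  \<open>2^k t\<close> around \<open>c\<close>, whose measure is at most \<open>C0 (2^k t)^m\<close>.\<close>
lemma nn_integral_decay_weight_le:
  fixes M :: "(real^'n) measure"
  assumes sets_M: "sets M = sets borel"
    and growth: "\<And>x \<rho>. \<rho> > 0 \<Longrightarrow> emeasure M (linf_ball x \<rho>) \<le> ennreal (C0 * \<rho> powr m)"
    and m: "m > 0" and e: "e > m" and t: "t > 0"
  shows "(\<integral>\<^sup>+ y. ennreal ((t / (t + linf c y)) powr e) \<partial>M) \<le> ennreal (decay_weight_const C0 m e * t powr m)"
proof -
  define q where "q = (2::real) powr (-e)"
  have q: "0 < q" unfolding q_def by simp
  define B where "B k = linf_ball c (2^k * t)" for k :: nat
  have B: "B k \<in> sets M" for k unfolding B_def sets_M by (rule linf_ball_borel)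
  define f where "f k y = ennreal (2 powr e * q^k) * indicator (B k) y" for k y
  have pointwise: "ennreal ((t / (t + linf c y)) powr e) \<le> (\<Sum>k. f k y)" for y
  proof -
    obtain k where k: "linf c y < 2^k * t" and ratio: "t / (t + linf c y) \<le> 2 / 2^k"
      using dyadic_scale_exists[OF t linf_nonneg] .
    have "(t / (t + linf c y)) powr e \<le> (2 / 2^k) powr e"
      using ratio t e m linf_nonneg[of c y] by (intro powr_mono2) auto
    also have "(2 / 2^k :: real) = 2 powr (1 - real k)"
      by (simp add: powr_diff powr_realpow)
    also have "(2 powr (1 - real k)) powr e = 2 powr e * q^k"
      unfolding q_def powr_powr powr_power[of 2, OF zero_neq_numeral[symmetric]]
      by (simp add: powr_add[symmetric] algebra_simps)
    finally have "ennreal ((t / (t + linf c y)) powr e) \<le> f k y"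
      unfolding f_def B_def linf_ball_def using k by (simp add: ennreal_leI)
    also have "\<dots> \<le> (\<Sum>k. f k y)"
      using sum_le_suminf[of "\<lambda>k. f k y" "{k}"] by (simp add: summableI)
    finally show ?thesis .
  qed
  have ratio: "q * 2 powr m = 2 powr (m - e)" unfolding q_def by (simp add: powr_add[symmetric])
  have ratio_lt: "norm (2 powr (m - e)) < (1::real)" using e by (simp add: powr_less_one)
  have "(\<integral>\<^sup>+ y. ennreal ((t / (t + linf c y)) powr e) \<partial>M) \<le> (\<integral>\<^sup>+ y. (\<Sum>k. f k y) \<partial>M)"
    by (intro nn_integral_mono pointwise)
  also have "\<dots> = (\<Sum>k. integral\<^sup>N M (f k))"
    by (rule nn_integral_suminf) (use B in \<open>auto simp: f_def\<close>)
  also have "\<dots> \<le> (\<Sum>k. ennreal (2 powr e * max C0 0 * t powr m * (2 powr (m - e))^k))"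
  proof (intro suminf_le summableI)
    fix k
    have "integral\<^sup>N M (f k) = ennreal (2 powr e * q^k) * emeasure M (B k)"
      unfolding f_def by (rule nn_integral_cmult_indicator[OF B])
    also have "emeasure M (B k) \<le> ennreal (max C0 0 * (2^k * t) powr m)"
      unfolding B_def using growth[of "2^k * t" c] t
      by (meson dual_order.trans ennreal_leI max.cobounded1 mult_right_mono powr_ge_zero
          zero_less_mult_iff zero_less_power zero_less_numeral)
    then have "ennreal (2 powr e * q^k) * emeasure M (B k)
        \<le> ennreal (2 powr e * q^k) * ennreal (max C0 0 * (2^k * t) powr m)"
      by (rule mult_left_mono) simp
    also have "(2^k * t) powr m = (2 powr m)^k * t powr m"
      using t by (simp add: powr_mult powr_realpow[symmetric] powr_powr powr_power mult.commute)
    also have "ennreal (2 powr e * q^k) * ennreal (max C0 0 * ((2 powr m)^k * t powr m))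
        = ennreal (2 powr e * max C0 0 * t powr m * (2 powr (m - e))^k)"
      using q unfolding ratio[symmetric] by (simp add: ennreal_mult'[symmetric] power_mult_distrib mult_ac)
    finally show "integral\<^sup>N M (f k) \<le> ennreal (2 powr e * max C0 0 * t powr m * (2 powr (m - e))^k)" .
  qed
  also have "\<dots> = ennreal (\<Sum>k. 2 powr e * max C0 0 * t powr m * (2 powr (m - e))^k)"
    by (intro suminf_ennreal2 summable_mult summable_geometric ratio_lt) simp
  also have "(\<Sum>k. 2 powr e * max C0 0 * t powr m * (2 powr (m - e))^k) = decay_weight_const C0 m e * t powr m"
    unfolding suminf_mult[OF summable_geometric[OF ratio_lt]] suminf_geometric[OF ratio_lt]
      decay_weight_const_def by simp
  finally show ?thesis .
qed

lemma size_bound_squared: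
  fixes t X :: real
  assumes kb: "cmod v \<le> C1 * t powr \<alpha> / X powr (m + \<alpha>)" and t: "t > 0" and X: "X > 0"
  shows "(cmod v)^2 \<le> C1^2 * t powr (-2*m) * (t / X) powr (2*(m + \<alpha>))"
proof -
  have "C1 * t powr \<alpha> / X powr (m + \<alpha>) = C1 * t powr (-m) * (t / X) powr (m + \<alpha>)"
    using t X by (simp add: powr_divide powr_add[symmetric] divide_powr_uminus)
  then have "(cmod v)^2 \<le> (C1 * t powr (-m) * (t / X) powr (m + \<alpha>))^2"
    using kb by (intro power_mono) auto
  also have "\<dots> = C1^2 * t powr (-2*m) * (t / X) powr (2*(m + \<alpha>))"
    using t X by (simp add: power_mult_distrib powr_power mult_ac)
  finally show ?thesis .
qed

text \<open>Either \<open>y\<close> is far from \<open>z\<close>, where the kernel is small, or far from \<open>x\<close>, where the weight is small.\<close>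
lemma far_kernel_weight_pointwise:
  fixes t d lam :: real
  assumes kb: "cmod v \<le> C1 * t powr \<alpha> / (t + linf y z) powr (m + \<alpha>)"
    and C1: "C1 \<ge> 0" and t: "t > 0" and td: "t \<le> d" and dxz: "d \<le> linf x z"
    and a: "0 < m + \<alpha>" "2*(m + \<alpha>) \<le> m * lam"
  shows "(cmod v)^2 * (t / (t + linf x y)) powr (m * lam)
    \<le> C1^2 * t powr (-2*m) * (t / d) powr (2*(m + \<alpha>))
       * (2 powr (2*(m + \<alpha>)) * (t / (t + linf x y)) powr (m * lam)
          + 2 powr (m * lam) * (t / (t + linf z y)) powr (2*(m + \<alpha>)))"
    (is "_ * ?wx \<le> ?c * (?A * ?wx + ?B * ?wz)")
proof -
  have d: "d > 0" using t td by simp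
  have "t + linf y z > 0" using t linf_nonneg[of y z] by simp
  then have v: "(cmod v)^2 \<le> C1^2 * t powr (-2*m) * ?wz"
    using size_bound_squared[OF kb t] by (simp add: linf_commute)
  have half_dist: "(t / r) powr e \<le> 2 powr e * (t / d) powr e" if "d / 2 \<le> r" "e \<ge> 0" for r e
  proof -
    have "(t / r) powr e \<le> (2 * (t / d)) powr e"
      using that t d by (intro powr_mono2) (auto simp: field_simps)
    also have "\<dots> = 2 powr e * (t / d) powr e" by (rule powr_mult)
    finally show ?thesis .
  qed
  have nonneg: "?A * ?wx \<ge> 0" "?B * ?wz \<ge> 0" by simp_all
  show ?thesis
  proof (cases "d / 2 \<le> linf z y")
    case True
    have "?wz \<le> ?A * (t / d) powr (2*(m + \<alpha>))"
      using True a t by (intro half_dist) auto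
    then have "C1^2 * t powr (-2*m) * ?wz \<le> C1^2 * t powr (-2*m) * (?A * (t / d) powr (2*(m + \<alpha>)))"
      by (intro mult_left_mono) simp_all
    from order_trans[OF v this] have "(cmod v)^2 \<le> ?c * ?A" by (simp add: mult_ac)
    then have "(cmod v)^2 * ?wx \<le> ?c * ?A * ?wx" by (intro mult_right_mono) simp_all
    also have "\<dots> \<le> ?c * (?A * ?wx + ?B * ?wz)" using nonneg C1 by (simp add: algebra_simps)
    finally show ?thesis .
  next
    case False
    then have "d / 2 \<le> linf x y" using dxz linf_triangle[of x z y] linf_commute[of y z] by simp
    then have "?wx \<le> 2 powr (m * lam) * (t / d) powr (m * lam)"
      using a t by (intro half_dist) auto
    also have "(t / d) powr (m * lam) \<le> (t / d) powr (2*(m + \<alpha>))"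
      using t td a by (intro powr_mono') auto
    finally have "?wx \<le> ?B * (t / d) powr (2*(m + \<alpha>))" by simp
    then have "(cmod v)^2 * ?wx \<le> C1^2 * t powr (-2*m) * ?wz * (?B * (t / d) powr (2*(m + \<alpha>)))"
      using v by (intro mult_mono) simp_all
    also have "\<dots> = ?c * (?B * ?wz)" by (simp add: mult_ac)
    also have "\<dots> \<le> ?c * (?A * ?wx + ?B * ?wz)" using nonneg C1 by (simp add: algebra_simps)
    finally show ?thesis .
  qed
qed

definition far_kernel_const :: "real \<Rightarrow> real \<Rightarrow> real \<Rightarrow> real \<Rightarrow> real \<Rightarrow> real" where
  "far_kernel_const C0 C1 m lam \<alpha> = C1^2 * (2 powr (2*(m + \<alpha>)) * decay_weight_const C0 m (m * lam)
      + 2 powr (m * lam) * decay_weight_const C0 m (2*(m + \<alpha>)))"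

lemma far_kernel_weighted_L2_le:
  fixes M :: "(real^'n) measure" and k :: "real^'n \<Rightarrow> complex"
  assumes sets_M: "sets M = sets borel"
    and growth: "\<And>x \<rho>. \<rho> > 0 \<Longrightarrow> emeasure M (linf_ball x \<rho>) \<le> ennreal (C0 * \<rho> powr m)"
    and m: "m > 0" and lam: "2 < lam" and alpha: "0 < \<alpha>" "\<alpha> \<le> m * (lam - 2) / 2"
    and kb: "\<And>y. cmod (k y) \<le> C1 * t powr \<alpha> / (t + linf y z) powr (m + \<alpha>)"
    and t: "0 < t" and td: "t \<le> d" and dxz: "d \<le> linf x z"
  shows "(\<integral>\<^sup>+ y. ennreal ((cmod (k y))^2 * (t / (t + linf x y)) powr (m * lam) / t powr m) \<partial>M)
    \<le> ennreal (far_kernel_const C0 C1 m lam \<alpha> * t powr (2*\<alpha>) * d powr (-2*(m + \<alpha>)))"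
proof -
  define a where "a = m + \<alpha>"
  define wx where "wx y = (t / (t + linf x y)) powr (m * lam)" for y
  define wz where "wz y = (t / (t + linf z y)) powr (2*a)" for y
  define A where "A = 2 powr (2*a)"
  define B where "B = 2 powr (m * lam)"
  define c where "c = C1^2 * t powr (-2*m) * (t / d) powr (2*a) / t powr m"
  have d: "d > 0" using t td by simp
  have C1: "C1 \<ge> 0"
  proof (rule ccontr)
    assume "\<not> C1 \<ge> 0"
    then have "C1 * t powr \<alpha> / (t + linf x z) powr (m + \<alpha>) < 0"
      using t linf_nonneg[of x z] by (intro divide_neg_pos mult_neg_pos) auto
    then show False using kb[of x] norm_ge_zero[of "k x"] by (simp add: linf_commute)
  qed
  have a: "0 < a" "2*a \<le> m * lam" "m < m * lam" "m < 2*a"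
    using m alpha lam unfolding a_def by (auto simp: field_simps)
  have nonneg: "c \<ge> 0" "A \<ge> 0" "B \<ge> 0" "wx y \<ge> 0" "wz y \<ge> 0" for y
    unfolding c_def A_def B_def wx_def wz_def by simp_all
  have [measurable]: "wx \<in> borel_measurable M" "wz \<in> borel_measurable M"
    unfolding wx_def wz_def measurable_cong_sets[OF sets_M refl] by measurable
  have Wx: "(\<integral>\<^sup>+ y. ennreal (wx y) \<partial>M) \<le> ennreal (decay_weight_const C0 m (m * lam) * t powr m)"
    unfolding wx_def using nn_integral_decay_weight_le[OF sets_M growth m a(3) t] .
  have Wz: "(\<integral>\<^sup>+ y. ennreal (wz y) \<partial>M) \<le> ennreal (decay_weight_const C0 m (2*a) * t powr m)"
    unfolding wz_def using nn_integral_decay_weight_le[OF sets_M growth m a(4) t] .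
  have W_nonneg: "decay_weight_const C0 m (m * lam) \<ge> 0" "decay_weight_const C0 m (2*a) \<ge> 0"
    using decay_weight_const_nonneg a by auto
  have "(\<integral>\<^sup>+ y. ennreal ((cmod (k y))^2 * wx y / t powr m) \<partial>M)
      \<le> (\<integral>\<^sup>+ y. ennreal c * (ennreal A * ennreal (wx y) + ennreal B * ennreal (wz y)) \<partial>M)"
  proof (rule nn_integral_mono)
    fix y
    have "(cmod (k y))^2 * wx y \<le> C1^2 * t powr (-2*m) * (t / d) powr (2*a) * (A * wx y + B * wz y)"
      using far_kernel_weight_pointwise[OF kb C1 t td dxz] a(1,2)
      unfolding wx_def wz_def A_def B_def a_def by simp
    then have "(cmod (k y))^2 * wx y / t powr m \<le> c * (A * wx y + B * wz y)"
      unfolding c_def by (simp add: divide_right_mono)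
    moreover have "ennreal (c * (A * wx y + B * wz y))
        = ennreal c * (ennreal A * ennreal (wx y) + ennreal B * ennreal (wz y))"
      using nonneg by (simp add: ennreal_mult ennreal_plus)
    ultimately show "ennreal ((cmod (k y))^2 * wx y / t powr m)
        \<le> ennreal c * (ennreal A * ennreal (wx y) + ennreal B * ennreal (wz y))"
      by (metis ennreal_leI)
  qed
  also have "\<dots> = ennreal c * (ennreal A * (\<integral>\<^sup>+ y. ennreal (wx y) \<partial>M) + ennreal B * (\<integral>\<^sup>+ y. ennreal (wz y) \<partial>M))"
    by (simp add: nn_integral_cmult nn_integral_add)
  also have "\<dots> \<le> ennreal c * (ennreal A * ennreal (decay_weight_const C0 m (m * lam) * t powr m)
      + ennreal B * ennreal (decay_weight_const C0 m (2*a) * t powr m))"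
    by (intro mult_left_mono add_mono Wx Wz) simp_all
  also have "\<dots> = ennreal (c * t powr m * (A * decay_weight_const C0 m (m * lam) + B * decay_weight_const C0 m (2*a)))"
    using nonneg W_nonneg by (simp add: ennreal_mult' ennreal_plus[symmetric] algebra_simps)
  also have "c * t powr m = C1^2 * t powr (2*\<alpha>) * d powr (-2*a)"
    using t d unfolding c_def a_def by (simp add: powr_divide divide_powr_uminus powr_add[symmetric] field_simps)
  finally show ?thesis
    unfolding wx_def far_kernel_const_def A_def B_def a_def by (simp add: mult_ac)
qed

lemma norm_integral_mult_sq_le:
  fixes g h :: "'a \<Rightarrow> complex"
  assumes [measurable]: "g \<in> borel_measurable M" "h \<in> borel_measurable M"
  shows "ennreal (cmod (\<integral>z. h z * g z \<partial>M))^2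
    \<le> (\<integral>\<^sup>+ z. ennreal (cmod (g z)) \<partial>M) * (\<integral>\<^sup>+ z. ennreal (cmod (g z) * (cmod (h z))^2) \<partial>M)"
proof -
  have "ennreal (cmod (\<integral>z. h z * g z \<partial>M)) \<le> (\<integral>\<^sup>+ z. ennreal (cmod (h z * g z)) \<partial>M)"
  proof (cases "integrable M (\<lambda>z. h z * g z)")
    case True
    then show ?thesis by (rule integral_norm_bound_ennreal)
  qed (simp add: not_integrable_integral_eq)
  also have "\<dots> = (\<integral>\<^sup>+ z. ennreal (sqrt (cmod (g z))) * ennreal (sqrt (cmod (g z)) * cmod (h z)) \<partial>M)"
    by (intro nn_integral_cong) (simp add: ennreal_mult[symmetric] norm_mult mult_ac)
  finally have "ennreal (cmod (\<integral>z. h z * g z \<partial>M))^2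
      \<le> (\<integral>\<^sup>+ z. ennreal (sqrt (cmod (g z))) * ennreal (sqrt (cmod (g z)) * cmod (h z)) \<partial>M)^2"
    by (rule power_mono) simp
  also have "\<dots> \<le> (\<integral>\<^sup>+ z. ennreal (sqrt (cmod (g z)))^2 \<partial>M)
      * (\<integral>\<^sup>+ z. ennreal (sqrt (cmod (g z)) * cmod (h z))^2 \<partial>M)"
    by (rule Cauchy_Schwarz_nn_integral) measurable
  also have "(\<integral>\<^sup>+ z. ennreal (sqrt (cmod (g z)))^2 \<partial>M) = (\<integral>\<^sup>+ z. ennreal (cmod (g z)) \<partial>M)"
    by (intro nn_integral_cong) (simp add: ennreal_power)
  also have "(\<integral>\<^sup>+ z. ennreal (sqrt (cmod (g z)) * cmod (h z))^2 \<partial>M)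
      = (\<integral>\<^sup>+ z. ennreal (cmod (g z) * (cmod (h z))^2) \<partial>M)"
    by (intro nn_integral_cong) (simp add: ennreal_power power_mult_distrib)
  finally show ?thesis .
qed

text \<open>Cauchy--Schwarz against \<open>|g|\<close> pointwise, then Tonelli.\<close>
lemma nn_integral_kernel_operator_sq_le:
  fixes M :: "'a measure" and k :: "'a \<Rightarrow> 'a \<Rightarrow> complex" and g :: "'a \<Rightarrow> complex"
  assumes sf: "sigma_finite_measure M" and sp: "space M = UNIV"
    and [measurable]: "g \<in> borel_measurable M"
      "(\<lambda>w. k (fst w) (snd w)) \<in> borel_measurable (M \<Otimes>\<^sub>M M)" "W \<in> borel_measurable M"
    and W_nonneg: "\<And>y. W y \<ge> 0"
    and g_supp: "\<And>z. z \<notin> Q \<Longrightarrow> g z = 0"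
    and bound: "\<And>z. z \<in> Q \<Longrightarrow> (\<integral>\<^sup>+ y. ennreal ((cmod (k y z))^2 * W y) \<partial>M) \<le> ennreal B"
  shows "(\<integral>\<^sup>+ y. ennreal ((cmod (\<integral>z. k y z * g z \<partial>M))^2 * W y) \<partial>M)
          \<le> ennreal B * (\<integral>\<^sup>+ z. ennreal (cmod (g z)) \<partial>M)^2"
proof -
  interpret pair_sigma_finite M M using sf by (simp add: pair_sigma_finite_def)
  have [measurable]: "(\<lambda>w. k (snd w) (fst w)) \<in> borel_measurable (M \<Otimes>\<^sub>M M)"
    using measurable_pair_swap_iff[of "\<lambda>w. k (fst w) (snd w)" M M borel] by (simp add: case_prod_beta')
  have [measurable]: "(\<lambda>z. k y z) \<in> borel_measurable M" "(\<lambda>y. k y z) \<in> borel_measurable M" for y z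
    using measurable_Pair2[of "\<lambda>w. k (fst w) (snd w)" M M borel y]
      measurable_Pair1[of "\<lambda>w. k (fst w) (snd w)" M M borel z] sp by simp_all
  define N where "N = (\<integral>\<^sup>+ z. ennreal (cmod (g z)) \<partial>M)"
  have "(\<integral>\<^sup>+ y. ennreal ((cmod (\<integral>z. k y z * g z \<partial>M))^2 * W y) \<partial>M)
      \<le> (\<integral>\<^sup>+ y. N * (\<integral>\<^sup>+ z. ennreal (cmod (g z) * (cmod (k y z))^2) \<partial>M) * ennreal (W y) \<partial>M)"
  proof (rule nn_integral_mono)
    fix y
    have "ennreal ((cmod (\<integral>z. k y z * g z \<partial>M))^2 * W y)
        = ennreal (cmod (\<integral>z. k y z * g z \<partial>M))^2 * ennreal (W y)"
      using W_nonneg by (simp add: ennreal_mult ennreal_power)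
    also have "\<dots> \<le> N * (\<integral>\<^sup>+ z. ennreal (cmod (g z) * (cmod (k y z))^2) \<partial>M) * ennreal (W y)"
      unfolding N_def by (intro mult_right_mono norm_integral_mult_sq_le) simp_all
    finally show "ennreal ((cmod (\<integral>z. k y z * g z \<partial>M))^2 * W y)
        \<le> N * (\<integral>\<^sup>+ z. ennreal (cmod (g z) * (cmod (k y z))^2) \<partial>M) * ennreal (W y)" .
  qed
  also have "\<dots> = N * (\<integral>\<^sup>+ y. (\<integral>\<^sup>+ z. ennreal (cmod (g z) * (cmod (k y z))^2 * W y) \<partial>M) \<partial>M)"
    using W_nonneg
    by (subst nn_integral_cmult[symmetric]) (auto simp: mult.assoc nn_integral_multc[symmetric] ennreal_mult'[symmetric]
        intro!: nn_integral_cong)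
  also have "\<dots> = N * (\<integral>\<^sup>+ z. ennreal (cmod (g z)) * (\<integral>\<^sup>+ y. ennreal ((cmod (k y z))^2 * W y) \<partial>M) \<partial>M)"
    using W_nonneg by (subst Fubini') (auto simp: nn_integral_cmult[symmetric] ennreal_mult mult_ac intro!: nn_integral_cong)
  also have "\<dots> \<le> N * (\<integral>\<^sup>+ z. ennreal (cmod (g z)) * ennreal B \<partial>M)"
  proof (rule mult_left_mono[OF nn_integral_mono])
    show "ennreal (cmod (g z)) * (\<integral>\<^sup>+ y. ennreal ((cmod (k y z))^2 * W y) \<partial>M) \<le> ennreal (cmod (g z)) * ennreal B" for z
      using bound[of z] g_supp[of z] by (cases "z \<in> Q") (simp_all add: mult_left_mono)
  qed simp
  also have "\<dots> = N * (N * ennreal B)" unfolding N_def by (simp add: nn_integral_multc)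
  finally show ?thesis unfolding N_def by (simp add: power2_eq_square mult_ac)
qed

lemma theta_op_far_weighted_L2_le:
  fixes M :: "(real^'n) measure" and g :: "real^'n \<Rightarrow> complex"
  assumes sets_M: "sets M = sets borel"
    and growth: "\<And>x \<rho>. \<rho> > 0 \<Longrightarrow> emeasure M (linf_ball x \<rho>) \<le> ennreal (C0 * \<rho> powr m)"
    and m: "m > 0" and lam: "2 < lam" and alpha: "0 < \<alpha>" "\<alpha> \<le> m * (lam - 2) / 2"
    and s_meas: "(\<lambda>w. s t (fst w) (snd w)) \<in> borel_measurable borel"
    and s_size: "\<And>x y. cmod (s t x y) \<le> C1 * t powr \<alpha> / (t + linf x y) powr (m + \<alpha>)"
    and t: "0 < t" and td: "t \<le> d"
    and g: "g \<in> borel_measurable M" and g_supp: "\<And>z. z \<notin> Q \<Longrightarrow> g z = 0"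
    and far: "\<And>z. z \<in> Q \<Longrightarrow> d \<le> linf x z"
  shows "(\<integral>\<^sup>+ y. ennreal ((cmod (theta_op M s t g y))^2 * (t / (t + linf x y)) powr (m * lam) / t powr m) \<partial>M)
    \<le> ennreal (far_kernel_const C0 C1 m lam \<alpha> * t powr (2*\<alpha>) * d powr (-2*(m + \<alpha>)))
       * (\<integral>\<^sup>+ z. ennreal (cmod (g z)) \<partial>M)^2"
proof -
  have sets_MM: "sets (M \<Otimes>\<^sub>M M) = sets (borel :: ((real^'n) \<times> (real^'n)) measure)"
    using sets_pair_measure_cong[OF sets_M sets_M] by (metis borel_prod)
  have W: "(\<lambda>y. (t / (t + linf x y)) powr (m * lam) / t powr m) \<in> borel_measurable M"
    unfolding measurable_cong_sets[OF sets_M refl] by measurable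
  show ?thesis
    unfolding theta_op_def times_divide_eq_right[symmetric]
  proof (rule nn_integral_kernel_operator_sq_le[OF _ _ g _ W _ g_supp])
    show "sigma_finite_measure M" by (rule sigma_finite_if_linf_ball_growth[OF sets_M growth])
    show "space M = UNIV" using sets_eq_imp_space_eq[OF sets_M] by simp
    show "(\<lambda>w. s t (fst w) (snd w)) \<in> borel_measurable (M \<Otimes>\<^sub>M M)"
      using s_meas unfolding measurable_cong_sets[OF sets_MM refl] .
    show "(\<integral>\<^sup>+ y. ennreal ((cmod (s t y z))^2 * ((t / (t + linf x y)) powr (m * lam) / t powr m)) \<partial>M)
        \<le> ennreal (far_kernel_const C0 C1 m lam \<alpha> * t powr (2*\<alpha>) * d powr (-2*(m + \<alpha>)))"
      if "z \<in> Q" for z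
      using far_kernel_weighted_L2_le[OF sets_M growth m lam alpha s_size t td far[OF that]]
      by (simp add: times_divide_eq_right)
  qed simp
qed

section \<open>Scales of separated cubes\<close>

lemma separated_scales:
  fixes L sR d t \<gamma> :: real and i j :: nat
  assumes L: "L > 0" and sR: "sR = L * 2 powr (- real i)" and \<gamma>: "0 \<le> \<gamma>" "\<gamma> \<le> 1"
    and sep: "sR powr \<gamma> * L powr (1 - \<gamma>) < d" and long: "2^j < (L + sR + d) / L" and t: "t \<le> sR"
  shows "t \<le> d" and "2^j * L * 2 powr (- (real i * \<gamma>)) \<le> 3 * d"
proof -
  define u where "u = (2::real) powr (- (real i * \<gamma>))"
  have u: "0 < u" "u \<le> 1"
    unfolding u_def using \<gamma> powr_mono[of "- (real i * \<gamma>)" 0 2] by auto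
  have "sR powr \<gamma> * L powr (1 - \<gamma>) = L * u"
    using L \<gamma> unfolding sR u_def by (simp add: powr_mult powr_powr powr_add[symmetric] algebra_simps)
  then have Lu: "L * u < d" using sep by simp
  have "2 powr (- real i) \<le> u" unfolding u_def using \<gamma> by (auto intro: mult_left_le)
  then have sR_le: "sR \<le> L * u" using L sR by simp
  then show "t \<le> d" using t Lu by linarith
  have long': "2^j * L < L + sR + d" using long L by (simp add: divide_simps)
  have "L * u \<le> L" using u L by simp
  show "2^j * L * u \<le> 3 * d"
  proof (cases "L \<le> d")
    case True
    have "2^j * L * u \<le> 2^j * L" using u L by simp
    then show ?thesis using long' True sR_le \<open>L * u \<le> L\<close> by linarith
  next
    case False
    then have "2^j * L < 3 * L" using long' sR_le \<open>L * u \<le> L\<close> by linarith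
    then have "(2::real)^j < 3" using L by simp
    then have "2^j * (L * u) \<le> 3 * (L * u)" using L u by (intro mult_right_mono) auto
    then show ?thesis using Lu by (simp add: mult_ac)
  qed
qed

text \<open>The constraints on \<open>\<gamma>\<close> make the loss \<open>2 m \<theta>\<close> from passing to the ancestor \<open>S\<close> cost only
  \<open>\<alpha>/2\<close> per generation, while separation gains \<open>\<alpha>\<close> per generation.\<close>
lemma decay_exponent_le:
  fixes m \<alpha> \<gamma> \<theta> :: real and i j r :: nat
  assumes m: "m > 0" and alpha: "\<alpha> > 0" and \<gamma>: "0 < \<gamma>" "\<gamma> < 1/2"
    and \<gamma>1: "\<gamma> \<le> \<alpha> / (2 * (m + \<alpha>))" and \<gamma>2: "m * \<gamma> / (1 - \<gamma>) \<le> \<alpha> / 4"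
    and \<theta>: "\<theta> \<le> (real (i + j) * \<gamma> + r) / (1 - \<gamma>) + 1"
  shows "2*(m + \<alpha>)*\<gamma>*i - 2*\<alpha>*i - 2*(m + \<alpha>)*j \<le> 4*m*r + 2*m - \<alpha>/2 * real (i + j) - 2*m*(j + \<theta>)"
proof -
  have "2*(m + \<alpha>)*\<gamma> \<le> \<alpha>" using \<gamma>1 m alpha by (simp add: field_simps)
  then have gain: "2*(m + \<alpha>)*\<gamma>*i \<le> \<alpha>*i" by (intro mult_right_mono) auto
  have "1 / (1 - \<gamma>) \<le> 2" using \<gamma> by (simp add: divide_simps)
  then have "m * r * (1 / (1 - \<gamma>)) \<le> m * r * 2" using m by (intro mult_left_mono) auto
  moreover have "real (i + j) * (m * \<gamma> / (1 - \<gamma>)) \<le> real (i + j) * (\<alpha> / 4)"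
    using \<gamma>2 by (intro mult_left_mono) auto
  moreover have "m * \<theta> \<le> m * ((real (i + j) * \<gamma> + r) / (1 - \<gamma>) + 1)" using \<theta> m by simp
  moreover have "m * ((real (i + j) * \<gamma> + r) / (1 - \<gamma>) + 1)
      = real (i + j) * (m * \<gamma> / (1 - \<gamma>)) + m * r * (1 / (1 - \<gamma>)) + m"
    by (simp add: add_divide_distrib distrib_left mult_ac)
  ultimately have "m*\<theta> \<le> real (i + j) * (\<alpha> / 4) + m * r * 2 + m" by linarith
  then have loss: "2*m*\<theta> \<le> \<alpha>/2 * real (i + j) + 4*m*r + 2*m" by (simp add: algebra_simps)
  have "(4*m*r + 2*m - \<alpha>/2 * real (i + j) - 2*m*(j + \<theta>))
      - (2*(m + \<alpha>)*\<gamma>*i - 2*\<alpha>*i - 2*(m + \<alpha>)*j)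
      = (\<alpha>*i - 2*(m + \<alpha>)*\<gamma>*i) + (\<alpha>/2 * real (i + j) + 4*m*r + 2*m - 2*m*\<theta>) + \<alpha>*j"
    by (simp add: algebra_simps)
  moreover have "\<alpha> * real j \<ge> 0" using alpha by simp
  ultimately show ?thesis using gain loss by linarith
qed

lemma far_scale_decay:
  fixes m \<alpha> \<gamma> K L t d \<theta> :: real and i j r :: nat
  assumes m: "m > 0" and alpha: "\<alpha> > 0" and \<gamma>: "0 < \<gamma>" "\<gamma> < 1/2"
    and \<gamma>1: "\<gamma> \<le> \<alpha> / (2 * (m + \<alpha>))" and \<gamma>2: "m * \<gamma> / (1 - \<gamma>) \<le> \<alpha> / 4"
    and K: "K \<ge> 0" and L: "L > 0" and t: "0 < t" "t \<le> L * 2 powr (- real i)"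
    and d: "2^j * L * 2 powr (- (real i * \<gamma>)) \<le> 3 * d"
    and \<theta>: "\<theta> \<le> (real (i + j) * \<gamma> + r) / (1 - \<gamma>) + 1"
  shows "K * t powr (2*\<alpha>) * d powr (-2*(m + \<alpha>))
     \<le> (sqrt (K * 3 powr (2*(m + \<alpha>)) * 2 powr (4*m*r + 2*m)) * 2 powr (- \<alpha> / 4 * real (i + j))
          * (L * 2 powr (j + \<theta>)) powr (- m))^2"
proof -
  define a where "a = m + \<alpha>"
  define c where "c = K * 3 powr (2*a) * L powr (-2*m)"
  have c: "c \<ge> 0" unfolding c_def using K by simp
  have "t powr (2*\<alpha>) \<le> (L * 2 powr (- real i)) powr (2*\<alpha>)"
    using t alpha by (intro powr_mono2) auto
  also have "\<dots> = L powr (2*\<alpha>) * 2 powr (-2*\<alpha>*i)"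
    by (simp add: powr_mult powr_powr mult_ac)
  finally have T: "t powr (2*\<alpha>) \<le> L powr (2*\<alpha>) * 2 powr (-2*\<alpha>*i)" .
  have "d powr (-2*a) \<le> (2^j * L * 2 powr (- (real i * \<gamma>)) / 3) powr (-2*a)"
    using d L alpha m unfolding a_def by (intro powr_mono2') auto
  also have "\<dots> = 3 powr (2*a) * L powr (-2*a) * 2 powr (2*a*\<gamma>*i - 2*a*j)"
    using L by (simp add: powr_divide powr_mult powr_powr powr_realpow[symmetric] powr_minus_divide
        powr_diff algebra_simps)
  finally have D: "d powr (-2*a) \<le> 3 powr (2*a) * L powr (-2*a) * 2 powr (2*a*\<gamma>*i - 2*a*j)" .
  have "K * t powr (2*\<alpha>) * d powr (-2*a)
      \<le> K * (L powr (2*\<alpha>) * 2 powr (-2*\<alpha>*i)) * (3 powr (2*a) * L powr (-2*a) * 2 powr (2*a*\<gamma>*i - 2*a*j))"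
    using T D K by (intro mult_mono) auto
  also have "\<dots> = K * 3 powr (2*a) * (L powr (2*\<alpha>) * L powr (-2*a))
      * (2 powr (-2*\<alpha>*i) * 2 powr (2*a*\<gamma>*i - 2*a*j))"
    by (simp add: mult_ac)
  also have "L powr (2*\<alpha>) * L powr (-2*a) = L powr (-2*m)"
    unfolding a_def by (simp add: powr_add[symmetric])
  also have "(2::real) powr (-2*\<alpha>*i) * 2 powr (2*a*\<gamma>*i - 2*a*j) = 2 powr (2*a*\<gamma>*i - 2*\<alpha>*i - 2*a*j)"
    by (simp add: powr_add[symmetric] algebra_simps)
  also have "K * 3 powr (2*a) * L powr (-2*m) * 2 powr (2*a*\<gamma>*i - 2*\<alpha>*i - 2*a*j)
      = c * 2 powr (2*a*\<gamma>*i - 2*\<alpha>*i - 2*a*j)"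
    unfolding c_def ..
  also have "\<dots> \<le> c * 2 powr (4*m*r + 2*m - \<alpha>/2 * real (i + j) - 2*m*(j + \<theta>))"
    using decay_exponent_le[OF m alpha \<gamma> \<gamma>1 \<gamma>2 \<theta>] c unfolding a_def
    by (intro mult_left_mono) (auto simp: mult_ac)
  also have "\<dots> = K * 3 powr (2*a) * 2 powr (4*m*r + 2*m) * 2 powr (- \<alpha> / 2 * real (i + j))
      * (L powr (-2*m) * 2 powr (-2*m*(j + \<theta>)))"
    unfolding c_def by (simp add: powr_add[symmetric] algebra_simps)
  also have "\<dots> = (sqrt (K * 3 powr (2*a) * 2 powr (4*m*r + 2*m)))^2 * (2 powr (- \<alpha> / 4 * real (i + j)))^2
          * ((L * 2 powr (j + \<theta>)) powr (- m))^2"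
  proof -
    have "(2 powr (- \<alpha> / 4 * real (i + j)))^2 = (2::real) powr (- \<alpha> / 2 * real (i + j))"
      by (simp add: powr_power)
    moreover have "((L * 2 powr (j + \<theta>)) powr (- m))^2 = L powr (-2*m) * 2 powr (-2*m*(j + \<theta>))"
      using L by (simp add: power_mult_distrib powr_power powr_mult powr_powr algebra_simps)
    ultimately show ?thesis using K by simp
  qed
  also have "\<dots> = (sqrt (K * 3 powr (2*a) * 2 powr (4*m*r + 2*m)) * 2 powr (- \<alpha> / 4 * real (i + j))
          * (L * 2 powr (j + \<theta>)) powr (- m))^2"
    by (simp add: power_mult_distrib)
  finally show ?thesis unfolding a_def .
qed

section \<open>Dyadic cubes, stopping cubes and martingale differences\<close>

lemma dcube_corner_mem:
  "(\<chi> i. 2 powr real_of_int k * real_of_int (v$i) + dshift \<beta> k $ i) \<in> dcube \<beta> k v"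
  unfolding dcube_def by (auto simp: algebra_simps)

lemma dcube_index_eq:
  assumes "x \<in> dcube \<beta> k v"
  shows "v $ i = \<lfloor>(x$i - dshift \<beta> k $ i) / 2 powr real_of_int k\<rfloor>"
proof (rule sym, rule floor_unique)
  have "0 < (2::real) powr real_of_int k" by simp
  then show "real_of_int (v $ i) \<le> (x$i - dshift \<beta> k $ i) / 2 powr real_of_int k"
    and "(x$i - dshift \<beta> k $ i) / 2 powr real_of_int k < real_of_int (v $ i) + 1"
    using assms unfolding dcube_def by (auto simp: field_simps)
qed

lemma dcube_index_unique: "x \<in> dcube \<beta> k v \<Longrightarrow> x \<in> dcube \<beta> k w \<Longrightarrow> v = w"
  by (simp add: vec_eq_iff dcube_index_eq)

text \<open>Equal cubes share their corner; moving it by the smaller side length leaves only the smaller cube.\<close>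
lemma dcube_level_unique:
  assumes "dcube \<beta> k v = dcube \<beta> k' v'"
  shows "k = k'"
proof -
  have less: False if "ka < kb" "dcube \<beta> ka va = dcube \<beta> kb vb" for ka kb va vb
  proof -
    define c where "c = (\<chi> i. 2 powr real_of_int ka * real_of_int (va$i) + dshift \<beta> ka $ i)"
    define c' where "c' = (\<chi> i. 2 powr real_of_int kb * real_of_int (vb$i) + dshift \<beta> kb $ i)"
    have "c \<in> dcube \<beta> kb vb" "c' \<in> dcube \<beta> ka va"
      using dcube_corner_mem that(2) unfolding c_def c'_def by metis+
    then have "c $ i = c' $ i" for i
      unfolding dcube_def c_def c'_def by (auto intro: order.antisym)
    moreover have "(2::real) powr real_of_int ka < 2 powr real_of_int kb" using that(1) by simp
    ultimately have "(\<chi> i. c $ i + 2 powr real_of_int ka) \<in> dcube \<beta> kb vb"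
      unfolding dcube_def c_def c'_def by (auto simp: algebra_simps)
    moreover have "(\<chi> i. c $ i + 2 powr real_of_int ka) \<notin> dcube \<beta> ka va"
      unfolding dcube_def c_def by (auto simp: algebra_simps)
    ultimately show False using that(2) by simp
  qed
  show ?thesis using less[OF _ assms] less[OF _ assms[symmetric]] by fastforce
qed

lemma dlev_eq: "Q \<in> Dk \<beta> k \<Longrightarrow> dlev \<beta> Q = k"
  unfolding dlev_def Dk_def by (rule the_equality) (auto dest: dcube_level_unique)

lemma Dgrid_Dk_dlev: "Q \<in> Dgrid \<beta> \<Longrightarrow> Q \<in> Dk \<beta> (dlev \<beta> Q)"
  unfolding Dgrid_def using dlev_eq by fastforce

lemma Dk_subset_Dgrid: "Dk \<beta> k \<subseteq> Dgrid \<beta>"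
  unfolding Dgrid_def by blast

lemma side_Dk: "Q \<in> Dk \<beta> k \<Longrightarrow> side \<beta> Q = 2 powr real_of_int k"
  unfolding side_def by (simp add: dlev_eq)

lemma Dk_nonempty: "Q \<in> Dk \<beta> k \<Longrightarrow> Q \<noteq> {}"
  unfolding Dk_def using dcube_corner_mem by blast

lemma Dk_eq_if_intersect: "P \<in> Dk \<beta> k \<Longrightarrow> F \<in> Dk \<beta> k \<Longrightarrow> P \<inter> F \<noteq> {} \<Longrightarrow> P = F"
  unfolding Dk_def using dcube_index_unique by blast

lemma dcube_borel: "dcube \<beta> k v \<in> sets borel"
proof -
  have "dcube \<beta> k v = (\<Inter>i. {x. 2 powr real_of_int k * real_of_int (v$i) + dshift \<beta> k $ i \<le> x$i}
       \<inter> {x. x$i < 2 powr real_of_int k * (real_of_int (v$i) + 1) + dshift \<beta> k $ i})"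
    unfolding dcube_def by auto
  also have "\<dots> \<in> sets borel" by measurable
  finally show ?thesis .
qed

lemma Dgrid_borel: "Q \<in> Dgrid \<beta> \<Longrightarrow> Q \<in> sets borel"
  unfolding Dgrid_def Dk_def using dcube_borel by blast

lemma stopgen_subset_Dgrid: "Qs \<in> Dgrid \<beta> \<Longrightarrow> stopgen \<beta> M b A p Qs j \<subseteq> Dgrid \<beta>"
  by (induction j) (auto simp: stopchildren_def)

lemma stopfam_subset_Dgrid: "Qs \<in> Dgrid \<beta> \<Longrightarrow> stopfam \<beta> M b A p Qs \<subseteq> Dgrid \<beta>"
  unfolding stopfam_def using stopgen_subset_Dgrid by blast

lemma top_in_stopfam: "Qs \<in> stopfam \<beta> M b A p Qs"
  unfolding stopfam_def by (auto intro!: exI[of _ 0])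

lemma Delta_eq_0_outside:
  assumes b_supp: "\<And>Q x. Q \<in> Dgrid \<beta> \<Longrightarrow> x \<notin> Q \<Longrightarrow> b Q x = 0"
    and Qs: "Qs \<in> Dgrid \<beta>" and "x \<notin> Q"
  shows "Delta \<beta> M b A p Qs Q f x = 0"
proof -
  have "x \<notin> Q'" if "Q' \<in> dchildren \<beta> Q" for Q'
    using that \<open>x \<notin> Q\<close> unfolding dchildren_def by auto
  moreover have "Q = Qs \<Longrightarrow> b Qs x = 0" using b_supp[OF Qs] \<open>x \<notin> Q\<close> by simp
  ultimately show ?thesis unfolding Delta_def by (simp add: sum.neutral)
qed

context
  fixes \<beta> :: "int \<Rightarrow> real^'n"
  assumes \<beta>01: "\<And>j i. \<beta> j $ i \<in> {0, 1}"
begin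

lemma summable_dshift: "summable (\<lambda>l. ((2::real) powr (real_of_int k - 1 - real l)) *\<^sub>R \<beta> (k - 1 - int l))"
proof (rule summable_comparison_test)
  have norm_\<beta>: "norm (\<beta> j) \<le> real CARD('n)" for j
  proof -
    have "norm (\<beta> j) \<le> (\<Sum>i\<in>UNIV. \<bar>\<beta> j $ i\<bar>)" by (rule norm_le_l1_cart)
    also have "\<dots> \<le> (\<Sum>i\<in>(UNIV::'n set). 1)"
    proof (rule sum_mono)
      show "\<bar>\<beta> j $ i\<bar> \<le> 1" for i using \<beta>01[of j i] by auto
    qed
    finally show ?thesis by simp
  qed
  show "\<exists>N. \<forall>l\<ge>N. norm (((2::real) powr (real_of_int k - 1 - real l)) *\<^sub>R \<beta> (k - 1 - int l))
      \<le> real CARD('n) * 2 powr (real_of_int k - 1) * (1/2)^l"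
  proof (intro exI allI impI)
    fix l :: nat
    have e: "(2::real) powr (real_of_int k - 1 - real l) = 2 powr (real_of_int k - 1) * (1/2)^l"
      by (simp add: powr_diff powr_realpow power_one_over divide_simps)
    show "norm (((2::real) powr (real_of_int k - 1 - real l)) *\<^sub>R \<beta> (k - 1 - int l))
      \<le> real CARD('n) * 2 powr (real_of_int k - 1) * (1/2)^l"
      unfolding e using norm_\<beta>[of "k - 1 - int l"] by (simp add: mult.commute mult.left_commute mult_left_mono)
  qed
  show "summable (\<lambda>l. real CARD('n) * 2 powr (real_of_int k - 1) * (1/2::real)^l)"
    by (intro summable_mult summable_geometric) simp
qed

lemma dshift_succ: "dshift \<beta> (k + 1) = dshift \<beta> k + (2 powr real_of_int k) *\<^sub>R \<beta> k"
proof -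
  let ?g = "\<lambda>l. ((2::real) powr (real_of_int (k + 1) - 1 - real l)) *\<^sub>R \<beta> (k + 1 - 1 - int l)"
  have "summable ?g" using summable_dshift[of "k + 1"] by simp
  then have "(\<Sum>l. ?g (Suc l)) = suminf ?g - ?g 0" by (rule suminf_split_head)
  moreover have "(\<lambda>l. ?g (Suc l)) = (\<lambda>l. ((2::real) powr (real_of_int k - 1 - real l)) *\<^sub>R \<beta> (k - 1 - int l))"
    by (auto simp: algebra_simps)
  ultimately show ?thesis unfolding dshift_def by (simp add: algebra_simps)
qed

text \<open>By \<open>dshift_succ\<close> the parent grid is shifted by \<open>2^k \<beta>\<^sub>k\<close>, so the parent index is
  \<open>(v - \<beta>\<^sub>k) div 2\<close>.\<close>
lemma dcube_subset_parent: "\<exists>u. dcube \<beta> k v \<subseteq> dcube \<beta> (k + 1) u"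
proof -
  define bi where "bi i = (if \<beta> k $ i = 1 then 1 else 0 :: int)" for i
  have \<beta>_bi: "\<beta> k $ i = real_of_int (bi i)" for i using \<beta>01[of k i] by (auto simp: bi_def)
  define u where "u = (\<chi> i. (v$i - bi i) div 2)"
  define P where "P = (2::real) powr real_of_int k"
  have P: "P > 0" unfolding P_def by simp
  have shift: "dshift \<beta> (k + 1) $ i = dshift \<beta> k $ i + P * real_of_int (bi i)" for i
    using dshift_succ[of k] \<beta>_bi unfolding P_def by simp
  have P2: "(2::real) powr real_of_int (k + 1) = 2 * P"
    unfolding P_def by (simp add: powr_add)
  have "x \<in> dcube \<beta> (k + 1) u" if x: "x \<in> dcube \<beta> k v" for x
    unfolding dcube_def P2 shift
  proof (intro CollectI allI)
    fix i
    define e where "e = (v$i - bi i) mod 2"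
    have "v$i = 2 * (u$i) + e + bi i" unfolding u_def e_def by simp
    then have v: "real_of_int (v$i) = 2 * real_of_int (u$i) + real_of_int e + real_of_int (bi i)"
      by simp
    have x_lo: "P * real_of_int (v$i) + dshift \<beta> k $ i \<le> x$i"
      and x_hi: "x$i < P * (real_of_int (v$i) + 1) + dshift \<beta> k $ i"
      using x unfolding dcube_def P_def by auto
    have "e = 0 \<or> e = 1" unfolding e_def by auto
    then show "2 * P * real_of_int (u $ i) + (dshift \<beta> k $ i + P * real_of_int (bi i)) \<le> x $ i \<and>
      x $ i < 2 * P * (real_of_int (u $ i) + 1) + (dshift \<beta> k $ i + P * real_of_int (bi i))"
      using x_lo x_hi P unfolding v by (elim disjE) (simp_all add: algebra_simps)
  qed
  then show ?thesis by blast
qed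

lemma dcube_subset_ancestor: "\<exists>u. dcube \<beta> k v \<subseteq> dcube \<beta> (k + int K) u"
proof (induction K)
  case 0
  show ?case by auto
next
  case (Suc K)
  then obtain u where "dcube \<beta> k v \<subseteq> dcube \<beta> (k + int K) u" by blast
  moreover obtain w where "dcube \<beta> (k + int K) u \<subseteq> dcube \<beta> (k + int K + 1) w"
    using dcube_subset_parent by blast
  ultimately have "dcube \<beta> k v \<subseteq> dcube \<beta> (k + int K + 1) w" by blast
  moreover have "k + int (Suc K) = k + int K + 1" by simp
  ultimately show ?case by metis
qed

lemma Dk_ancestor_exists:
  assumes "P \<in> Dk \<beta> k" and "k \<le> k'"
  shows "\<exists>F \<in> Dk \<beta> k'. P \<subseteq> F"
proof -
  obtain v where "P = dcube \<beta> k v" using assms(1) unfolding Dk_def by blast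
  moreover obtain u where "dcube \<beta> k v \<subseteq> dcube \<beta> (k + int (nat (k' - k))) u"
    using dcube_subset_ancestor by blast
  moreover have "k + int (nat (k' - k)) = k'" using assms(2) by simp
  ultimately show ?thesis unfolding Dk_def by auto
qed

lemma Dk_nested:
  assumes "P \<in> Dk \<beta> k" "F \<in> Dk \<beta> k'" "k \<le> k'" "P \<inter> F \<noteq> {}"
  shows "P \<subseteq> F"
  using Dk_ancestor_exists[OF assms(1,3)] Dk_eq_if_intersect[OF _ assms(2)] assms(4) by blast

lemma danc_Dk:
  assumes Q: "Q \<in> Dk \<beta> k" and "K \<ge> 0"
  shows "danc \<beta> Q K \<in> Dk \<beta> (k + K)" and "Q \<subseteq> danc \<beta> Q K"
proof -
  obtain F where F: "F \<in> Dk \<beta> (k + K)" "Q \<subseteq> F"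
    using Dk_ancestor_exists[OF Q, of "k + K"] \<open>K \<ge> 0\<close> by auto
  have "\<exists>!S. S \<in> Dk \<beta> (k + K) \<and> Q \<subseteq> S"
    using F Dk_eq_if_intersect[of _ \<beta> "k + K" F] Dk_nonempty[OF Q] by blast
  then have "danc \<beta> Q K \<in> Dk \<beta> (k + K) \<and> Q \<subseteq> danc \<beta> Q K"
    unfolding danc_def dlev_eq[OF Q] by (rule theI')
  then show "danc \<beta> Q K \<in> Dk \<beta> (k + K)" and "Q \<subseteq> danc \<beta> Q K" by auto
qed

lemma side_danc:
  assumes "Q \<in> Dk \<beta> k" and "K \<ge> 0"
  shows "side \<beta> (danc \<beta> Q K) = 2 powr real_of_int (k + K)"
  using danc_Dk(1)[OF assms] side_Dk by blast

text \<open>Stopping cubes containing \<open>P\<close> are nested, so the one of least generation is the minimal one.\<close>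
lemma stopparent_in_stopfam:
  assumes Qs: "Qs \<in> Dgrid \<beta>" and P: "P \<in> Dgrid \<beta>" and "P \<subseteq> Qs"
  shows "stopparent \<beta> M b A p Qs P \<in> stopfam \<beta> M b A p Qs"
proof -
  define SF where "SF = stopfam \<beta> M b A p Qs"
  define k0 where "k0 = dlev \<beta> P"
  have Pk: "P \<in> Dk \<beta> k0" using Dgrid_Dk_dlev[OF P] k0_def by simp
  have Pne: "P \<noteq> {}" using Dk_nonempty[OF Pk] .
  have SF_Dk: "F \<in> Dk \<beta> (dlev \<beta> F)" if "F \<in> SF" for F
    using that stopfam_subset_Dgrid[OF Qs] Dgrid_Dk_dlev unfolding SF_def by blast
  have nested: "F \<subseteq> F'" if "F \<in> SF" "F' \<in> SF" "P \<subseteq> F" "P \<subseteq> F'" "dlev \<beta> F \<le> dlev \<beta> F'" for F F'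
    using Dk_nested[OF SF_Dk[OF that(1)] SF_Dk[OF that(2)] that(5)] that(3,4) Pne by blast
  have above: "k0 \<le> dlev \<beta> F" if "F \<in> SF" "P \<subseteq> F" for F
  proof (rule ccontr)
    assume "\<not> k0 \<le> dlev \<beta> F"
    then have "F \<subseteq> P" using Dk_nested[OF SF_Dk[OF that(1)] Pk] that(2) Pne by auto
    then have "F = P" using that by blast
    then show False using \<open>\<not> k0 \<le> dlev \<beta> F\<close> k0_def by simp
  qed
  define Pr where "Pr n \<longleftrightarrow> (\<exists>F\<in>SF. P \<subseteq> F \<and> dlev \<beta> F = k0 + int n)" for n
  have "Qs \<in> SF" unfolding SF_def by (rule top_in_stopfam)
  then have "Pr (nat (dlev \<beta> Qs - k0))"
    unfolding Pr_def using above \<open>P \<subseteq> Qs\<close> by (intro bexI[of _ Qs]) auto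
  then have "Pr (LEAST n. Pr n)" by (rule LeastI)
  then obtain F0 where F0: "F0 \<in> SF" "P \<subseteq> F0" "dlev \<beta> F0 = k0 + int (LEAST n. Pr n)"
    unfolding Pr_def by blast
  have minimal: "F0 \<subseteq> F" if "F \<in> SF" "P \<subseteq> F" for F
  proof (rule nested[OF F0(1) that(1) F0(2) that(2)])
    have "Pr (nat (dlev \<beta> F - k0))" unfolding Pr_def using that above[OF that] by auto
    then have "(LEAST n. Pr n) \<le> nat (dlev \<beta> F - k0)" by (rule Least_le)
    then show "dlev \<beta> F0 \<le> dlev \<beta> F" using F0(3) above[OF that] by linarith
  qed
  have "stopparent \<beta> M b A p Qs P = F0"
    unfolding stopparent_def SF_def[symmetric]
  proof (rule the_equality)
    show "F0 \<in> SF \<and> P \<subseteq> F0 \<and> (\<forall>F'\<in>SF. P \<subseteq> F' \<longrightarrow> F0 \<subseteq> F')"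
      using F0 minimal by blast
  qed (use F0 minimal in blast)
  then show ?thesis using F0 unfolding SF_def by simp
qed

lemma borel_measurable_Delta:
  assumes sets_M: "sets M = sets borel"
    and b_meas: "\<And>Q. Q \<in> Dgrid \<beta> \<Longrightarrow> b Q \<in> borel_measurable M"
    and Qs: "Qs \<in> Dgrid \<beta>" and Q: "Q \<in> Dgrid \<beta>" and "Q \<subseteq> Qs"
  shows "Delta \<beta> M b A p Qs Q f \<in> borel_measurable M"
proof -
  define sp where "sp = stopparent \<beta> M b A p Qs"
  have b_sp[measurable]: "b (sp P) \<in> borel_measurable M" if "P \<in> Dgrid \<beta>" "P \<subseteq> Qs" for P
    using b_meas stopparent_in_stopfam[OF Qs that] stopfam_subset_Dgrid[OF Qs] unfolding sp_def by blast
  have [measurable]: "b Qs \<in> borel_measurable M" using b_meas[OF Qs] .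
  have child: "Q' \<in> Dgrid \<beta>" "Q' \<subseteq> Q" if "Q' \<in> dchildren \<beta> Q" for Q'
    using that Dk_subset_Dgrid unfolding dchildren_def by auto
  show ?thesis
    unfolding Delta_def sp_def[symmetric]
  proof (intro borel_measurable_add borel_measurable_sum)
    fix Q' assume Q': "Q' \<in> dchildren \<beta> Q"
    have [measurable]: "b (sp Q') \<in> borel_measurable M" "b (sp Q) \<in> borel_measurable M"
      using b_sp child[OF Q'] Q \<open>Q \<subseteq> Qs\<close> by auto
    have [measurable]: "Q' \<in> sets M" using Dgrid_borel child[OF Q'] sets_M by auto
    show "(\<lambda>x. (avg M Q' f / avg M Q' (b (sp Q')) * b (sp Q') x
                - avg M Q f / avg M Q (b (sp Q)) * b (sp Q) x) * indicator Q' x) \<in> borel_measurable M"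
      by measurable
  qed measurable
qed

lemma far_cube_decay:
  fixes m \<alpha> \<gamma> K t :: real and i j r :: nat
  assumes m: "m > 0" and alpha: "\<alpha> > 0" and \<gamma>: "0 < \<gamma>" "\<gamma> < 1/2"
    and \<gamma>1: "\<gamma> \<le> \<alpha> / (2 * (m + \<alpha>))" and \<gamma>2: "m * \<gamma> / (1 - \<gamma>) \<le> \<alpha> / 4"
    and K: "K \<ge> 0" and Q: "Q \<in> Dgrid \<beta>" and sQR: "side \<beta> Q = 2 ^ i * side \<beta> R"
    and sep: "side \<beta> R powr \<gamma> * side \<beta> Q powr (1 - \<gamma>) < setdist_inf Q R"
    and long: "2 ^ j < longdist \<beta> Q R / side \<beta> Q"
    and t: "side \<beta> R / 2 < t" "t \<le> side \<beta> R"
  shows "t \<le> setdist_inf Q R"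
    and "K * t powr (2*\<alpha>) * setdist_inf Q R powr (-2*(m + \<alpha>))
     \<le> (sqrt (K * 3 powr (2*(m + \<alpha>)) * 2 powr (4*m*r + 2*m)) * 2 powr (- \<alpha> / 4 * real (i + j))
          * side \<beta> (danc \<beta> Q (int j + thetafun \<gamma> r (i + j))) powr (- m))^2"
proof -
  define L where "L = side \<beta> Q"
  define \<theta> where "\<theta> = thetafun \<gamma> r (i + j)"
  have Qk: "Q \<in> Dk \<beta> (dlev \<beta> Q)" using Dgrid_Dk_dlev[OF Q] .
  then have L: "L = 2 powr real_of_int (dlev \<beta> Q)" "L > 0" unfolding L_def by (simp_all add: side_Dk)
  have sR: "side \<beta> R = L * 2 powr (- real i)"
    using sQR unfolding L_def by (simp add: powr_minus_divide powr_realpow)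
  then have "side \<beta> R > 0" using L by simp
  then have "t > 0" using t(1) by linarith
  have long': "2 ^ j < (L + side \<beta> R + setdist_inf Q R) / L"
    using long unfolding longdist_def L_def .
  note scales = separated_scales[OF L(2) sR _ _ sep[folded L_def] long' t(2)]
  then show "t \<le> setdist_inf Q R" using \<gamma> by simp
  have "0 \<le> (real (i + j) * \<gamma> + real r) / (1 - \<gamma>)" using \<gamma> by simp
  then have "\<theta> \<ge> 0" unfolding \<theta>_def thetafun_def by linarith
  then have "side \<beta> (danc \<beta> Q (int j + \<theta>)) = L * 2 powr (real j + real_of_int \<theta>)"
    using side_danc[OF Qk, of "int j + \<theta>"] L(1) by (simp add: powr_add[symmetric] add_ac)
  moreover have "real_of_int \<theta> \<le> (real (i + j) * \<gamma> + real r) / (1 - \<gamma>) + 1"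
    unfolding \<theta>_def thetafun_def by (rule of_int_ceiling_le_add_one)
  ultimately show "K * t powr (2*\<alpha>) * setdist_inf Q R powr (-2*(m + \<alpha>))
     \<le> (sqrt (K * 3 powr (2*(m + \<alpha>)) * 2 powr (4*m*r + 2*m)) * 2 powr (- \<alpha> / 4 * real (i + j))
          * side \<beta> (danc \<beta> Q (int j + thetafun \<gamma> r (i + j))) powr (- m))^2"
    using far_scale_decay[OF m alpha \<gamma> \<gamma>1 \<gamma>2 K L(2) \<open>t > 0\<close>] t(2) sR scales(2) \<gamma>
    unfolding \<theta>_def by simp
qed

end

theorem lemma4p2:
  fixes M :: "(real^'n) measure"
    and m lam \<alpha> \<gamma> p A C0 C1 :: real
    and r :: nat
    and s :: "real \<Rightarrow> real^'n \<Rightarrow> real^'n \<Rightarrow> complex"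
    and \<beta> :: "int \<Rightarrow> real^'n"
    and b :: "(real^'n) set \<Rightarrow> real^'n \<Rightarrow> complex"
    and Qs :: "(real^'n) set"
  assumes sets_M: "sets M = sets borel"
    and m_pos: "m > 0"
    and growth: "\<And>x \<rho>. \<rho> > 0 \<Longrightarrow> emeasure M (linf_ball x \<rho>) \<le> ennreal (C0 * \<rho> powr m)"
    and lam: "lam > 2"
    and alpha: "0 < \<alpha>" "\<alpha> \<le> m * (lam - 2) / 2"
    and s_meas: "\<And>t. t > 0 \<Longrightarrow> (\<lambda>w. s t (fst w) (snd w)) \<in> borel_measurable borel"
    and s_size: "\<And>t x y. t > 0 \<Longrightarrow> cmod (s t x y) \<le> C1 * t powr \<alpha> / (t + linf x y) powr (m + \<alpha>)"
    and s_holder: "\<And>t x y y'. t > 0 \<Longrightarrow> linf y y' < t / 2 \<Longrightarrow>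
                     cmod (s t x y - s t x y') \<le> C1 * linf y y' powr \<alpha> / (t + linf x y) powr (m + \<alpha>)"
    and beta01: "\<And>j i. \<beta> j $ i \<in> {0, 1}"
    and r_ge: "r \<ge> 1"
    and gamma: "0 < \<gamma>" "\<gamma> < 1/2" "\<gamma> \<le> \<alpha> / (2 * (m + \<alpha>))" "m * \<gamma> / (1 - \<gamma>) \<le> \<alpha> / 4"
    and p: "1 < p" "p \<le> 2"
    and b_meas: "\<And>Q. Q \<in> Dgrid \<beta> \<Longrightarrow> b Q \<in> borel_measurable M"
    and b_supp: "\<And>Q x. Q \<in> Dgrid \<beta> \<Longrightarrow> x \<notin> Q \<Longrightarrow> b Q x = 0"
    and b_avg: "\<And>Q. Q \<in> Dgrid \<beta> \<Longrightarrow> (\<integral>x\<in>Q. b Q x \<partial>M) = complex_of_real (measure M Q)"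
    and b_Lp: "\<And>Q. Q \<in> Dgrid \<beta> \<Longrightarrow>
                 (\<integral>\<^sup>+ x. ennreal (cmod (b Q x) powr p) \<partial>M) \<le> ennreal (A * measure M Q)"
    and Qs: "Qs \<in> Dgrid \<beta>"
  shows "\<exists>C. \<forall>Q R i j x t f.
     Q \<in> Dgrid \<beta> \<and> R \<in> Dgrid \<beta> \<and> Q \<subseteq> Qs \<and>
     side \<beta> Q = 2 ^ i * side \<beta> R \<and>
     setdist_inf Q R > side \<beta> R powr \<gamma> * side \<beta> Q powr (1 - \<gamma>) \<and>
     2 ^ j < longdist \<beta> Q R / side \<beta> Q \<and> longdist \<beta> Q R / side \<beta> Q \<le> 2 ^ (j + 1) \<and>
     x \<in> R \<and> side \<beta> R / 2 < t \<and> t \<le> side \<beta> R \<and>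
     f \<in> borel_measurable M \<and> (\<forall>K. compact K \<longrightarrow> set_integrable M K f)
     \<longrightarrow>
     (\<integral>\<^sup>+ y. ennreal ((cmod (theta_op M s t (Delta \<beta> M b A p Qs Q f) y))\<^sup>2
                 * (t / (t + linf x y)) powr (m * lam) / t powr m) \<partial>M)
       \<le> (ennreal (C * 2 powr (- \<alpha> / 4 * real (i + j))
              * side \<beta> (danc \<beta> Q (int j + thetafun \<gamma> r (i + j))) powr (- m))
          * (\<integral>\<^sup>+ z. ennreal (cmod (Delta \<beta> M b A p Qs Q f z)) \<partial>M))\<^sup>2"
proof -
  define KZ where "KZ = far_kernel_const C0 C1 m lam \<alpha>"
  define C where "C = sqrt (KZ * 3 powr (2*(m + \<alpha>)) * 2 powr (4*m*r + 2*m))"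
  have "m < m * lam" "m < 2*(m + \<alpha>)" using m_pos lam alpha by simp_all
  then have KZ: "KZ \<ge> 0" unfolding KZ_def far_kernel_const_def using decay_weight_const_nonneg by simp
  show ?thesis
  proof (intro exI[of _ C] allI impI, elim conjE)
    fix Q R i j x t f
    assume Q: "Q \<in> Dgrid \<beta>" and "Q \<subseteq> Qs" and "x \<in> R"
      and geometry: "side \<beta> Q = 2 ^ i * side \<beta> R"
        "side \<beta> R powr \<gamma> * side \<beta> Q powr (1 - \<gamma>) < setdist_inf Q R"
        "2 ^ j < longdist \<beta> Q R / side \<beta> Q" "side \<beta> R / 2 < t" "t \<le> side \<beta> R"
    note scales = far_cube_decay[where \<beta> = \<beta>, OF beta01 m_pos alpha(1) gamma KZ Q geometry]
    have "t > 0" using geometry(4,5) by linarith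
    let ?X = "C * 2 powr (- \<alpha> / 4 * real (i + j)) * side \<beta> (danc \<beta> Q (int j + thetafun \<gamma> r (i + j))) powr (- m)"
    let ?N = "\<integral>\<^sup>+ z. ennreal (cmod (Delta \<beta> M b A p Qs Q f z)) \<partial>M"
    have "(\<integral>\<^sup>+ y. ennreal ((cmod (theta_op M s t (Delta \<beta> M b A p Qs Q f) y))\<^sup>2
                 * (t / (t + linf x y)) powr (m * lam) / t powr m) \<partial>M)
      \<le> ennreal (KZ * t powr (2*\<alpha>) * setdist_inf Q R powr (-2*(m + \<alpha>))) * ?N^2"
      unfolding KZ_def
      by (rule theta_op_far_weighted_L2_le[where s = s and t = t, OF sets_M growth m_pos lam alpha
          s_meas[OF \<open>t > 0\<close>] s_size[OF \<open>t > 0\<close>] \<open>t > 0\<close> scales(1)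
          borel_measurable_Delta[where \<beta> = \<beta> and b = b, OF beta01 sets_M b_meas Qs Q \<open>Q \<subseteq> Qs\<close>]
          Delta_eq_0_outside[where b = b, OF b_supp Qs] setdist_inf_le_linf[OF _ \<open>x \<in> R\<close>]])
    also have "\<dots> \<le> ennreal (?X^2) * ?N^2"
      using scales(2) unfolding C_def by (intro mult_right_mono ennreal_leI) simp_all
    also have "\<dots> = (ennreal ?X * ?N)^2"
      using ennreal_power[of ?X 2] KZ unfolding C_def by (simp add: power_mult_distrib)
    finally show "(\<integral>\<^sup>+ y. ennreal ((cmod (theta_op M s t (Delta \<beta> M b A p Qs Q f) y))\<^sup>2
                 * (t / (t + linf x y)) powr (m * lam) / t powr m) \<partial>M) \<le> (ennreal ?X * ?N)\<^sup>2" .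
  qed
qed

end
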